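(* Under the LP mechanism (in either its fractional or its randomized interpretation), truthfully reporting the execution times is a weakly dominant strategy for every machine: for every true cost matrix $\mathbf t$, every machine $i$ and every declaration matrix $\hat{\mathbf t}$, $C_i(\mathbf t_i,\hat{\mathbf t}_{-i})\le C_i(\hat{\mathbf t})$.
   Context: Scheduling without payments: $n$ machines, $m$ tasks; machine $i$ has private true times $t_{i,j}\ge0$ and declares $\hat t_{i,j}\ge0$; $\mathbf t_i$ denotes row $i$ and $(\mathbf x_i,\hat{\mathbf t}_{-i})$ the matrix where row $i$ of $\hat{\mathbf t}$ is replaced by $\mathbf x_i$. Machines are bound by their declarations: a machine assigned (a fraction of, or with some probability) task $j$ executes it for time $\max\{\hat t_{i,j},t_{i,j}\}$ (times the fraction). Given a mechanism outputting $\alpha_{i,j}(\hat{\mathbf t})\in[0,1]$ with $\sum_i\alpha_{i,j}=1$ for each $j$ (interpreted either as the fraction of task $j$ given to machine $i$, or as the probability that machine $i$ gets task $j$), the cost of machine $i$ is $C_i(\hat{\mathbf t})=\sum_j\alpha_{i,j}(\hat{\mathbf t})\max\{\hat t_{i,j},t_{i,j}\}$. The LP mechanism, on declarations $\hat{\mathbf t}$, outputs an optimal solution $\alpha(\hat{\mathbf t})$ (selected by some fixed rule among optimal solutions, e.g.\ lexicographically smallest) of the linear program: minimize $\mu$ subject to $\sum_i\alpha_{i,j}=1$ for all $j$, $\mu-\sum_j\alpha_{i,j}\hat t_{i,j}\ge0$ for all $i$, and $\alpha_{i,j}\ge0$ for all $i,j$. The LP fractional mechanism interprets $\alpha$ as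 fractions; the LP randomized mechanism interprets $\alpha$ as allocation probabilities. *)

theory Defs
  imports Complex_Main
begin

text \<open>Machines are indexed by i < n, tasks by j < m; matrices are nat => nat => real.\<close>

definition lp_feasible :: "nat \<Rightarrow> nat \<Rightarrow> (nat \<Rightarrow> nat \<Rightarrow> real) \<Rightarrow> (nat \<Rightarrow> nat \<Rightarrow> real) \<Rightarrow> real \<Rightarrow> bool" where
  "lp_feasible n m d \<alpha> \<mu> \<longleftrightarrow>
     (\<forall>j<m. (\<Sum>i<n. \<alpha> i j) = 1) \<and>
     (\<forall>i<n. \<mu> - (\<Sum>j<m. \<alpha> i j * d i j) \<ge> 0) \<and>
     (\<forall>i<n. \<forall>j<m. \<alpha> i j \<ge> 0)"

definition lp_optimal :: "nat \<Rightarrow> nat \<Rightarrow> (nat \<Rightarrow> nat \<Rightarrow> real) \<Rightarrow> (nat \<Rightarrow> nat \<Rightarrow> real) \<Rightarrow> bool" where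
  "lp_optimal n m d \<alpha> \<longleftrightarrow>
     (\<exists>\<mu>. lp_feasible n m d \<alpha> \<mu> \<and> (\<forall>\<beta> \<nu>. lp_feasible n m d \<beta> \<nu> \<longrightarrow> \<mu> \<le> \<nu>))"

definition LP_mechanism :: "nat \<Rightarrow> nat \<Rightarrow> ((nat \<Rightarrow> nat \<Rightarrow> real) \<Rightarrow> (nat \<Rightarrow> nat \<Rightarrow> real)) \<Rightarrow> bool" where
  "LP_mechanism n m sel \<longleftrightarrow>
     (\<forall>d. (\<forall>i<n. \<forall>j<m. d i j \<ge> 0) \<longrightarrow> lp_optimal n m d (sel d))"

text \<open>Cost of machine i with true times t, declarations d and allocation alpha
  (fractions, or probabilities in which case it is the expected cost).\<close>
definition mcost :: "nat \<Rightarrow> (nat \<Rightarrow> nat \<Rightarrow> real) \<Rightarrow> (nat \<Rightarrow> nat \<Rightarrow> real) \<Rightarrow> (nat \<Rightarrow> nat \<Rightarrow> real) \<Rightarrow> nat \<Rightarrow> real" where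
  "mcost m t d \<alpha> i = (\<Sum>j<m. \<alpha> i j * max (d i j) (t i j))"

definition replace_row :: "(nat \<Rightarrow> nat \<Rightarrow> real) \<Rightarrow> nat \<Rightarrow> (nat \<Rightarrow> real) \<Rightarrow> (nat \<Rightarrow> nat \<Rightarrow> real)" where
  "replace_row d i x = (\<lambda>k. if k = i then x else d k)"

end

theory Submission
  imports Defs
begin

text \<open>Let \<open>\<alpha>\<close> be the LP's choice on the declarations \<open>th\<close>, with makespan \<open>\<mu>\<close>. At an optimum
  every machine is loaded to exactly \<open>\<mu>\<close>: otherwise shifting a small share of every task onto an
  underloaded machine lowers the makespan. Hence machine \<open>i\<close>'s cost under \<open>\<alpha>\<close> is at least both its
  declared load \<open>\<mu>\<close> and its true load, so with row \<open>i\<close> replaced by the truth, \<open>\<alpha>\<close> remains feasible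
  with makespan equal to that cost. The optimum for the truthful declaration is no larger, and it
  bounds machine \<open>i\<close>'s true cost there.\<close>

lemma lp_feasible_shift_to_row:
  assumes feas: "lp_feasible n m d \<alpha> \<mu>"
    and row_nonneg: "\<forall>j<m. d i j \<ge> 0" and i: "i < n"
    and e: "0 \<le> e" "e \<le> 1"
  shows "lp_feasible n m d
           (\<lambda>k j. if k = i then \<alpha> i j + e * (1 - \<alpha> i j) else (1 - e) * \<alpha> k j)
           (max ((1 - e) * \<mu>) ((\<Sum>j<m. \<alpha> i j * d i j) + e * (\<Sum>j<m. d i j)))"
    (is "lp_feasible n m d ?\<beta> (max ?others ?own)")
proof -
  have \<alpha>_nonneg: "\<forall>k<n. \<forall>j<m. \<alpha> k j \<ge> 0" and col_sum: "\<forall>j<m. (\<Sum>k<n. \<alpha> k j) = 1"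
    and load: "\<forall>k<n. (\<Sum>j<m. \<alpha> k j * d k j) \<le> \<mu>"
    using feas by (auto simp: lp_feasible_def)
  have \<alpha>_le_1: "\<alpha> k j \<le> 1" if "k < n" "j < m" for k j
  proof -
    have "\<alpha> k j \<le> (\<Sum>k<n. \<alpha> k j)"
      using that \<alpha>_nonneg by (intro member_le_sum) auto
    thus ?thesis using col_sum that by simp
  qed
  show ?thesis
    unfolding lp_feasible_def
  proof (intro conjI allI impI)
    fix j assume j: "j < m"
    have "(\<Sum>k<n. ?\<beta> k j) = ?\<beta> i j + (1 - e) * (\<Sum>k\<in>{..<n}-{i}. \<alpha> k j)"
      using i by (simp add: sum.remove sum_distrib_left)
    also have "(\<Sum>k\<in>{..<n}-{i}. \<alpha> k j) = 1 - \<alpha> i j"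
      using col_sum j i by (simp add: sum.remove) (metis add_diff_cancel_left')
    finally show "(\<Sum>k<n. ?\<beta> k j) = 1" by (simp add: algebra_simps)
  next
    fix k j assume "k < n" "j < m"
    then show "0 \<le> ?\<beta> k j" using \<alpha>_nonneg \<alpha>_le_1[of i j] i e by auto
  next
    fix k assume k: "k < n"
    show "0 \<le> max ?others ?own - (\<Sum>j<m. ?\<beta> k j * d k j)"
    proof (cases "k = i")
      case True
      have "(\<Sum>j<m. ?\<beta> k j * d k j)
              = (\<Sum>j<m. \<alpha> i j * d i j) + e * (\<Sum>j<m. (1 - \<alpha> i j) * d i j)"
        by (simp add: True distrib_right sum.distrib sum_distrib_left mult.assoc)
      also have "(\<Sum>j<m. (1 - \<alpha> i j) * d i j) \<le> (\<Sum>j<m. d i j)"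
        using \<alpha>_nonneg row_nonneg i by (intro sum_mono) (simp add: algebra_simps)
      finally show ?thesis using e by (simp add: mult_left_mono)
    next
      case False
      have "(\<Sum>j<m. ?\<beta> k j * d k j) = (1 - e) * (\<Sum>j<m. \<alpha> k j * d k j)"
        by (simp add: False sum_distrib_left mult.assoc)
      also have "\<dots> \<le> ?others" using load k e by (intro mult_left_mono) auto
      finally show ?thesis by linarith
    qed
  qed
qed

lemma lp_optimal_makespan_le_load:
  assumes feas: "lp_feasible n m d \<alpha> \<mu>"
    and opt: "\<forall>\<beta> \<nu>. lp_feasible n m d \<beta> \<nu> \<longrightarrow> \<mu> \<le> \<nu>"
    and row_nonneg: "\<forall>j<m. d i j \<ge> 0" and i: "i < n"
  shows "\<mu> \<le> (\<Sum>j<m. \<alpha> i j * d i j)"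
proof (rule ccontr)
  define L where "L = (\<Sum>j<m. \<alpha> i j * d i j)"
  define D where "D = (\<Sum>j<m. d i j)"
  assume "\<not> \<mu> \<le> (\<Sum>j<m. \<alpha> i j * d i j)"
  hence L_less: "L < \<mu>" by (simp add: L_def)
  have L_nonneg: "L \<ge> 0"
    unfolding L_def using feas row_nonneg i by (auto simp: lp_feasible_def intro!: sum_nonneg)
  moreover have D_nonneg: "D \<ge> 0" unfolding D_def using row_nonneg by (auto intro!: sum_nonneg)
  ultimately have \<mu>_pos: "\<mu> > 0" using L_less by linarith
  \<comment> \<open>small enough that machine \<open>i\<close> stays below \<open>\<mu>\<close> after absorbing the share \<open>e\<close> of every task\<close>
  define e where "e = (\<mu> - L) / (2 * (D + \<mu> + 1))"
  have e_pos: "e > 0" unfolding e_def using L_less D_nonneg \<mu>_pos by (auto intro!: divide_pos_pos)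
  have "e \<le> 1" unfolding e_def using L_nonneg D_nonneg \<mu>_pos by (simp add: field_simps)
  have "e * D = (\<mu> - L) * (D / (2 * (D + \<mu> + 1)))" unfolding e_def by simp
  also have "\<dots> < (\<mu> - L) * 1"
    using L_less D_nonneg \<mu>_pos by (intro mult_strict_left_mono) (auto simp: field_simps)
  finally have own_less: "L + e * D < \<mu>" by simp
  have "lp_feasible n m d
          (\<lambda>k j. if k = i then \<alpha> i j + e * (1 - \<alpha> i j) else (1 - e) * \<alpha> k j)
          (max ((1 - e) * \<mu>) (L + e * D))"
    unfolding L_def D_def using lp_feasible_shift_to_row[OF feas row_nonneg i] e_pos \<open>e \<le> 1\<close>
    by simp
  hence "\<mu> \<le> max ((1 - e) * \<mu>) (L + e * D)" using opt by blast
  moreover have "max ((1 - e) * \<mu>) (L + e * D) < \<mu>" using e_pos \<mu>_pos own_less by auto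
  ultimately show False by linarith
qed

lemma lp_feasible_replace_row:
  assumes feas: "lp_feasible n m d \<alpha> \<mu>" and "\<mu> \<le> \<nu>"
    and "(\<Sum>j<m. \<alpha> i j * x j) \<le> \<nu>"
  shows "lp_feasible n m (replace_row d i x) \<alpha> \<nu>"
  using assms unfolding lp_feasible_def replace_row_def by force

lemma mcost_ge_declared_load:
  assumes "\<forall>j<m. \<alpha> i j \<ge> 0"
  shows "(\<Sum>j<m. \<alpha> i j * d i j) \<le> mcost m t d \<alpha> i"
  unfolding mcost_def using assms by (intro sum_mono mult_left_mono) auto

lemma mcost_ge_true_load:
  assumes "\<forall>j<m. \<alpha> i j \<ge> 0"
  shows "(\<Sum>j<m. \<alpha> i j * t i j) \<le> mcost m t d \<alpha> i"
  unfolding mcost_def using assms by (intro sum_mono mult_left_mono) auto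

lemma mcost_truthful_row_le_makespan:
  assumes "lp_feasible n m (replace_row d i (t i)) \<alpha> \<mu>" and "i < n"
  shows "mcost m t (replace_row d i (t i)) \<alpha> i \<le> \<mu>"
proof -
  have "(\<Sum>j<m. \<alpha> i j * replace_row d i (t i) i j) \<le> \<mu>"
    using assms by (simp add: lp_feasible_def)
  then show ?thesis by (simp add: mcost_def replace_row_def)
qed

lemma lp_optimal_feasible_at_cost_after_truthful_row:
  assumes feas: "lp_feasible n m d \<alpha> \<mu>"
    and opt: "\<forall>\<beta> \<nu>. lp_feasible n m d \<beta> \<nu> \<longrightarrow> \<mu> \<le> \<nu>"
    and row_nonneg: "\<forall>j<m. d i j \<ge> 0" and i: "i < n"
  shows "lp_feasible n m (replace_row d i (t i)) \<alpha> (mcost m t d \<alpha> i)"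
proof (rule lp_feasible_replace_row[OF feas])
  have \<alpha>_row_nonneg: "\<forall>j<m. \<alpha> i j \<ge> 0" using feas i by (simp add: lp_feasible_def)
  have "\<mu> \<le> (\<Sum>j<m. \<alpha> i j * d i j)"
    by (rule lp_optimal_makespan_le_load[OF feas opt row_nonneg i])
  also have "\<dots> \<le> mcost m t d \<alpha> i" using \<alpha>_row_nonneg by (rule mcost_ge_declared_load)
  finally show "\<mu> \<le> mcost m t d \<alpha> i" .
  show "(\<Sum>j<m. \<alpha> i j * t i j) \<le> mcost m t d \<alpha> i"
    using \<alpha>_row_nonneg by (rule mcost_ge_true_load)
qed

lemma LP_mechanism_optimal:
  assumes "LP_mechanism n m sel" and "\<forall>k<n. \<forall>j<m. d k j \<ge> 0"
  obtains \<mu> where "lp_feasible n m d (sel d) \<mu>"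
    and "\<forall>\<beta> \<nu>. lp_feasible n m d \<beta> \<nu> \<longrightarrow> \<mu> \<le> \<nu>"
  using assms unfolding LP_mechanism_def lp_optimal_def by blast

theorem theorem4:
  fixes n m :: nat and sel :: "(nat \<Rightarrow> nat \<Rightarrow> real) \<Rightarrow> (nat \<Rightarrow> nat \<Rightarrow> real)"
    and t th :: "nat \<Rightarrow> nat \<Rightarrow> real" and i :: nat
  assumes "LP_mechanism n m sel"
    and "\<forall>k<n. \<forall>j<m. t k j \<ge> 0"
    and "\<forall>k<n. \<forall>j<m. th k j \<ge> 0"
    and "i < n"
  shows "mcost m t (replace_row th i (t i)) (sel (replace_row th i (t i))) i
           \<le> mcost m t th (sel th) i"
proof -
  define th' where "th' = replace_row th i (t i)"
  have "\<forall>k<n. \<forall>j<m. th' k j \<ge> 0" using assms(2,3) by (simp add: th'_def replace_row_def)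
  then obtain \<mu>' where feas': "lp_feasible n m th' (sel th') \<mu>'"
    and opt': "\<forall>\<beta> \<nu>. lp_feasible n m th' \<beta> \<nu> \<longrightarrow> \<mu>' \<le> \<nu>"
    using LP_mechanism_optimal[OF assms(1)] by blast
  obtain \<mu> where feas: "lp_feasible n m th (sel th) \<mu>"
    and opt: "\<forall>\<beta> \<nu>. lp_feasible n m th \<beta> \<nu> \<longrightarrow> \<mu> \<le> \<nu>"
    using LP_mechanism_optimal[OF assms(1,3)] by blast
  have "lp_feasible n m th' (sel th) (mcost m t th (sel th) i)"
    unfolding th'_def using assms(3,4)
    by (intro lp_optimal_feasible_at_cost_after_truthful_row[OF feas opt]) auto
  with opt' have "\<mu>' \<le> mcost m t th (sel th) i" by blast
  moreover have "mcost m t th' (sel th') i \<le> \<mu>'"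
    using feas' assms(4) unfolding th'_def by (rule mcost_truthful_row_le_makespan)
  ultimately show ?thesis unfolding th'_def by linarith
qed

end
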